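(* Let $I=(u..v)$ and $J=(c..d)$ be two conserved intervals of $\mathcal{P}$ with $u<c\leq v<d$. Then $(u..c)$, $(c..v)$, $(v..d)$ and $(u..d)$ are conserved intervals of $\mathcal{P}$.
   Context: Let $n\geq 2$ and let $\mathcal{P}=\{P_1,\ldots,P_K\}$ be signed permutations of $\{1,\ldots,n\}$: each $P_k$ is an ordering of $1,\ldots,n$ in which each element carries a sign $+$ or $-$. Assume $P_1=(+1,+2,\ldots,+n)$ and that every $P_k$ has first element $+1$ and last element $+n$. For integers $i\leq j$ write $(i..j)=\{i,\ldots,j\}$. A conserved interval of $\mathcal{P}$ is either a singleton, or a set $(a..c)$ with $a<c$ which (ignoring signs) occupies consecutive positions in every $P_k$ and which, in every $P_k$, has either $+a$ at its left end and $+c$ at its right end, or $-c$ at its left end and $-a$ at its right end. *)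

theory Defs
  imports Main
begin

text \<open>A signed permutation of {1..n} is a list of nonzero integers: entry +k / -k
  means element k with sign + / -. The absolute values enumerate 1..n exactly once.\<close>
definition signed_perm :: "nat \<Rightarrow> int list \<Rightarrow> bool" where
  "signed_perm n P \<longleftrightarrow> length P = n \<and> distinct (map abs P) \<and> 0 \<notin> set P
     \<and> abs ` set P = {1..int n}"

definition conserved_in :: "int list \<Rightarrow> int \<Rightarrow> int \<Rightarrow> bool" where
  "conserved_in P a c \<longleftrightarrow> (\<exists>i. i + nat (c - a) < length P
     \<and> abs ` set (take (nat (c - a) + 1) (drop i P)) = {a..c}
     \<and> ((P ! i = a \<and> P ! (i + nat (c - a)) = c) \<or>
        (P ! i = - c \<and> P ! (i + nat (c - a)) = - a)))"

definition conserved :: "nat \<Rightarrow> int list list \<Rightarrow> int \<Rightarrow> int \<Rightarrow> bool" where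
  "conserved n Ps a c \<longleftrightarrow> (a = c \<and> 1 \<le> a \<and> a \<le> int n)
     \<or> (a < c \<and> (\<forall>P\<in>set Ps. conserved_in P a c))"

end

theory Submission
  imports Defs
begin

text \<open>Fix one signed permutation P. Since the absolute values in P are distinct, the
  positions holding the values of (u..v) and of (c..d) are two windows A and B, and the
  positions holding (c..v) are exactly A \<inter> B. Replacing P by its reversal with all signs
  flipped if necessary, I reads +u \<dots> +v. Then A starts outside B and ends inside it, so B
  starts inside A; hence B cannot start with -d, i.e. J reads +c \<dots> +d, and counting
  A \<inter> B shows that B starts exactly c - u positions after A. Cutting A \<union> B at the
  positions of c and v gives the four claimed windows with the right endpoints. The
  singleton case c = v only needs c \<in> {1..n}.\<close>

definition reflect :: "int list \<Rightarrow> int list" where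
  "reflect P = map uminus (rev P)"

definition conserved_pos :: "int list \<Rightarrow> int \<Rightarrow> int \<Rightarrow> bool" where
  "conserved_pos P a c \<longleftrightarrow> (\<exists>i. i + nat (c - a) < length P
     \<and> (\<lambda>p. \<bar>P ! p\<bar>) ` {i..i + nat (c - a)} = {a..c}
     \<and> P ! i = a \<and> P ! (i + nat (c - a)) = c)"

lemma conserved_posI:
  assumes "i + nat (c - a) < length P" and "(\<lambda>p. \<bar>P ! p\<bar>) ` {i..i + nat (c - a)} = {a..c}"
    and "P ! i = a" and "P ! (i + nat (c - a)) = c"
  shows "conserved_pos P a c"
  using assms unfolding conserved_pos_def by blast

lemma abs_set_window:
  assumes "i + L < length P"
  shows "abs ` set (take (L + 1) (drop i P)) = (\<lambda>p. \<bar>P ! p\<bar>) ` {i..i + L}"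
proof -
  have "set (take (L + 1) (drop i P)) = (!) (drop i P) ` {0..<L + 1}"
    by (rule nth_image[symmetric]) (use assms in simp)
  also have "\<dots> = (!) P ` {i..i + L}"
  proof -
    have shift: "{i..i + L} = (+) i ` {0..<L + 1}"
      by (simp add: atLeastLessThanSuc_atLeastAtMost)
    show ?thesis
      unfolding shift image_image using assms by (intro image_cong) auto
  qed
  finally show ?thesis by (simp add: image_image)
qed

lemma conserved_in_windows:
  "conserved_in P a c \<longleftrightarrow> (\<exists>i. i + nat (c - a) < length P
     \<and> (\<lambda>p. \<bar>P ! p\<bar>) ` {i..i + nat (c - a)} = {a..c}
     \<and> ((P ! i = a \<and> P ! (i + nat (c - a)) = c) \<or> (P ! i = - c \<and> P ! (i + nat (c - a)) = - a)))"
  unfolding conserved_in_def by (metis abs_set_window)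

lemma reflect_reflect [simp]: "reflect (reflect P) = P"
  by (simp add: reflect_def rev_map[symmetric] comp_def)

lemma length_reflect [simp]: "length (reflect P) = length P"
  by (simp add: reflect_def)

lemma distinct_abs_reflect [simp]: "distinct (map abs (reflect P)) \<longleftrightarrow> distinct (map abs P)"
  by (simp add: reflect_def rev_map[symmetric] comp_def)

lemma reflect_window:
  assumes len: "i + L + k + 1 = length P"
  shows "(\<lambda>p. \<bar>reflect P ! p\<bar>) ` {k..k + L} = (\<lambda>p. \<bar>P ! p\<bar>) ` {i..i + L}"
    and "reflect P ! k = - P ! (i + L)" and "reflect P ! (k + L) = - P ! i"
proof -
  have "{i..i + L} = (\<lambda>p. length P - 1 - p) ` {k..k + L}"
  proof (rule equalityI)
    show "{i..i + L} \<subseteq> (\<lambda>p. length P - 1 - p) ` {k..k + L}"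
    proof
      fix x assume "x \<in> {i..i + L}"
      then show "x \<in> (\<lambda>p. length P - 1 - p) ` {k..k + L}"
        using len by (intro image_eqI[of _ _ "length P - 1 - x"]) auto
    qed
  qed (use len in auto)
  then show "(\<lambda>p. \<bar>reflect P ! p\<bar>) ` {k..k + L} = (\<lambda>p. \<bar>P ! p\<bar>) ` {i..i + L}"
    using len by (auto simp: reflect_def rev_nth image_iff)
  have "length P - Suc k = i + L" "length P - Suc (k + L) = i"
    using len by auto
  then show "reflect P ! k = - P ! (i + L)" and "reflect P ! (k + L) = - P ! i"
    using len by (simp_all add: reflect_def rev_nth)
qed

lemma conserved_in_iff_conserved_pos:
  "conserved_in P a c \<longleftrightarrow> conserved_pos P a c \<or> conserved_pos (reflect P) a c"
proof -
  let ?L = "nat (c - a)"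
  let ?win = "\<lambda>i. i + ?L < length P \<and> (\<lambda>p. \<bar>P ! p\<bar>) ` {i..i + ?L} = {a..c}"
  have "(\<exists>i. ?win i \<and> P ! i = - c \<and> P ! (i + ?L) = - a) \<longleftrightarrow> conserved_pos (reflect P) a c"
  proof
    assume "\<exists>i. ?win i \<and> P ! i = - c \<and> P ! (i + ?L) = - a"
    then obtain i where "?win i" "P ! i = - c" "P ! (i + ?L) = - a" by blast
    moreover define k where "k = length P - 1 - (i + ?L)"
    ultimately have "i + ?L + k + 1 = length P" by auto
    with reflect_window[OF this] \<open>?win i\<close> \<open>P ! i = - c\<close> \<open>P ! (i + ?L) = - a\<close>
    show "conserved_pos (reflect P) a c"
      unfolding conserved_pos_def by (intro exI[of _ k]) auto
  next
    assume "conserved_pos (reflect P) a c"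
    then obtain k where "k + ?L < length P" and k: "(\<lambda>p. \<bar>reflect P ! p\<bar>) ` {k..k + ?L} = {a..c}"
      "reflect P ! k = a" "reflect P ! (k + ?L) = c"
      unfolding conserved_pos_def by auto
    moreover define i where "i = length P - 1 - (k + ?L)"
    ultimately have "i + ?L + k + 1 = length P" by auto
    with reflect_window[OF this] \<open>k + ?L < length P\<close> k
    show "\<exists>i. ?win i \<and> P ! i = - c \<and> P ! (i + ?L) = - a"
      by (intro exI[of _ i]) auto
  qed
  then show ?thesis
    unfolding conserved_in_windows conserved_pos_def[of P a c] by blast
qed

lemma image_overlapping_windows:
  fixes g :: "nat \<Rightarrow> 'a :: linorder"
  assumes inj: "inj_on g {i..i + a + b + e}"
    and A: "g ` {i..i + a + b} = {u..v}" and B: "g ` {i + a..i + a + b + e} = {c..d}"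
    and gc: "g (i + a) = c" and gv: "g (i + a + b) = v"
    and order: "u < c" "c \<le> v" "v < d"
  shows "g ` {i..i + a} = {u..c}" and "g ` {i + a..i + a + b} = {c..v}"
    and "g ` {i + a + b..i + a + b + e} = {v..d}" and "g ` {i..i + a + b + e} = {u..d}"
proof -
  let ?A = "{i..i + a + b}" and ?B = "{i + a..i + a + b + e}"
  have "{i..i + a} = (?A - ?B) \<union> {i + a}" by auto
  then have "g ` {i..i + a} = g ` (?A - ?B) \<union> {c}"
    by (simp add: gc)
  also have "g ` (?A - ?B) = {u..v} - {c..d}"
    unfolding A[symmetric] B[symmetric] by (rule inj_on_image_set_diff[OF inj]) auto
  finally show "g ` {i..i + a} = {u..c}"
    using order by auto
  have "{i + a..i + a + b} = ?A \<inter> ?B" by auto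
  also have "g ` (?A \<inter> ?B) = {u..v} \<inter> {c..d}"
    unfolding A[symmetric] B[symmetric] by (rule inj_on_image_Int[OF inj]) auto
  finally show "g ` {i + a..i + a + b} = {c..v}"
    using order by auto
  have "{i + a + b..i + a + b + e} = (?B - ?A) \<union> {i + a + b}" by auto
  then have "g ` {i + a + b..i + a + b + e} = g ` (?B - ?A) \<union> {v}"
    by (simp add: gv)
  also have "g ` (?B - ?A) = {c..d} - {u..v}"
    unfolding A[symmetric] B[symmetric] by (rule inj_on_image_set_diff[OF inj]) auto
  finally show "g ` {i + a + b..i + a + b + e} = {v..d}"
    using order by auto
  have "{i..i + a + b + e} = ?A \<union> ?B" by auto
  then have "g ` {i..i + a + b + e} = {u..v} \<union> {c..d}"
    by (simp only: image_Un A B)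
  then show "g ` {i..i + a + b + e} = {u..d}"
    using order by auto
qed

lemma overlapping_window_start:
  fixes g :: "nat \<Rightarrow> int"
  assumes inj: "inj_on g {..<N}" and lens: "i + nat (v - u) < N" "j + nat (d - c) < N"
    and B: "g ` {j..j + nat (d - c)} = {c..d}"
    and gi: "g i = u" "g (i + nat (v - u)) = v" and order: "u < c" "c \<le> v" "v < d"
  shows "i < j" and "j \<le> i + nat (v - u)"
proof -
  have sub: "{j..j + nat (d - c)} \<subseteq> {..<N}" using lens by auto
  have "i \<notin> {j..j + nat (d - c)}"
    using inj_on_image_mem_iff[OF inj _ sub, of i] lens B gi order by auto
  moreover have "i + nat (v - u) \<in> {j..j + nat (d - c)}"
    using inj_on_image_mem_iff[OF inj _ sub, of "i + nat (v - u)"] lens B gi order by auto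
  ultimately show "i < j" and "j \<le> i + nat (v - u)" by auto
qed

lemma overlapping_window_offset:
  fixes g :: "nat \<Rightarrow> int"
  assumes inj: "inj_on g {..<N}" and lens: "i + nat (v - u) < N" "j + nat (d - c) < N"
    and A: "g ` {i..i + nat (v - u)} = {u..v}" and B: "g ` {j..j + nat (d - c)} = {c..d}"
    and ij: "i < j" "j \<le> i + nat (v - u)" and gd: "g (j + nat (d - c)) = d"
    and order: "u < c" "c \<le> v" "v < d"
  shows "j = i + nat (c - u)"
proof -
  let ?A = "{i..i + nat (v - u)}" and ?B = "{j..j + nat (d - c)}"
  have sub: "?A \<subseteq> {..<N}" "?B \<subseteq> {..<N}" using lens by auto
  have "j + nat (d - c) \<notin> ?A"
    using inj_on_image_mem_iff[OF inj _ sub(1), of "j + nat (d - c)"] lens A gd order by auto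
  then have overlap: "?A \<inter> ?B = {j..i + nat (v - u)}" using ij by auto
  have "card (?A \<inter> ?B) = card (g ` (?A \<inter> ?B))"
    by (rule card_image[symmetric], rule inj_on_subset[OF inj]) (use sub in auto)
  also have "g ` (?A \<inter> ?B) = {u..v} \<inter> {c..d}"
    using inj_on_image_Int[OF inj sub] A B by simp
  also have "\<dots> = {c..v}" using order by auto
  finally have "i + nat (v - u) + 1 - j = nat (v - c + 1)"
    unfolding overlap by simp
  then show ?thesis using ij order by linarith
qed

lemma conserved_pos_overlap:
  assumes dist: "distinct (map abs P)"
    and I: "conserved_pos P u v" and J: "conserved_in P c d"
    and order: "u < c" "c \<le> v" "v < d"
  shows "conserved_pos P u c \<and> conserved_pos P c v \<and> conserved_pos P v d \<and> conserved_pos P u d"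
proof -
  define g where "g = (\<lambda>p. \<bar>P ! p\<bar>)"
  have inj: "inj_on g {..<length P}"
    using dist by (auto simp: g_def inj_on_def distinct_conv_nth)
  obtain i where leni: "i + nat (v - u) < length P" and A: "g ` {i..i + nat (v - u)} = {u..v}"
    and Pi: "P ! i = u" "P ! (i + nat (v - u)) = v"
    using I unfolding conserved_pos_def g_def by blast
  obtain j where lenj: "j + nat (d - c) < length P" and B: "g ` {j..j + nat (d - c)} = {c..d}"
    and Jends: "(P ! j = c \<and> P ! (j + nat (d - c)) = d) \<or> (P ! j = - d \<and> P ! (j + nat (d - c)) = - c)"
    using J unfolding conserved_in_windows g_def by blast
  have "u \<in> g ` {i..i + nat (v - u)}" using A order by simp
  then have "0 \<le> u" by (auto simp: g_def)
  then have gi: "g i = u" "g (i + nat (v - u)) = v" using Pi order by (simp_all add: g_def)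
  note start = overlapping_window_start[OF inj leni lenj B gi order]
  then have "g j \<in> {u..v}" using A by auto
  then have Pj: "P ! j = c" "P ! (j + nat (d - c)) = d" using Jends order by (auto simp: g_def)
  then have gd: "g (j + nat (d - c)) = d" using order \<open>0 \<le> u\<close> by (simp add: g_def)
  define a b e where "a = nat (c - u)" and "b = nat (v - c)" and "e = nat (d - v)"
  from overlapping_window_offset[OF inj leni lenj A B start gd order]
  have j: "j = i + a" by (simp add: a_def)
  have lengths: "nat (v - u) = a + b" "nat (d - c) = b + e" "nat (d - u) = a + b + e"
    using order by (simp_all add: a_def b_def e_def)
  have len: "i + a + b + e < length P" using lenj j lengths by simp
  have A': "g ` {i..i + a + b} = {u..v}" using A lengths by (simp add: add.assoc)
  have B': "g ` {i + a..i + a + b + e} = {c..d}" using B j lengths by (simp add: add.assoc)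
  have gc: "g (i + a) = c" using Pj j order \<open>0 \<le> u\<close> by (simp add: g_def)
  have gv: "g (i + a + b) = v" using gi lengths by (simp add: add.assoc)
  have "inj_on g {i..i + a + b + e}" by (rule inj_on_subset[OF inj]) (use len in auto)
  note windows = image_overlapping_windows[OF this A' B' gc gv order]
  have Pc: "P ! (i + a) = c" and Pv: "P ! (i + a + b) = v" and Pd: "P ! (i + a + b + e) = d"
    using Pi Pj j lengths by (simp_all add: add.assoc)
  note facts = windows[unfolded g_def] len Pi Pc Pv Pd
    a_def[symmetric] b_def[symmetric] e_def[symmetric] lengths(3)
  have "conserved_pos P u c" by (rule conserved_posI[of i]) (use facts in simp_all)
  moreover have "conserved_pos P c v" by (rule conserved_posI[of "i + a"]) (use facts in simp_all)
  moreover have "conserved_pos P v d" by (rule conserved_posI[of "i + a + b"]) (use facts in simp_all)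
  moreover have "conserved_pos P u d" by (rule conserved_posI[of i]) (use facts in \<open>simp_all add: add.assoc\<close>)
  ultimately show ?thesis by blast
qed

lemma conserved_in_overlap:
  assumes dist: "distinct (map abs P)"
    and I: "conserved_in P u v" and J: "conserved_in P c d"
    and order: "u < c" "c \<le> v" "v < d"
  shows "conserved_in P u c \<and> conserved_in P c v \<and> conserved_in P v d \<and> conserved_in P u d"
proof -
  from I consider "conserved_pos P u v" | "conserved_pos (reflect P) u v"
    by (auto simp: conserved_in_iff_conserved_pos)
  then show ?thesis
  proof cases
    case 1
    from conserved_pos_overlap[OF dist 1 J order] show ?thesis
      by (simp add: conserved_in_iff_conserved_pos)
  next
    case 2
    have "conserved_in (reflect P) c d"
      using J by (auto simp: conserved_in_iff_conserved_pos)
    from conserved_pos_overlap[OF _ 2 this order] dist show ?thesis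
      by (simp add: conserved_in_iff_conserved_pos)
  qed
qed

lemma conserved_in_subset_abs_set:
  assumes "conserved_in P a c"
  shows "{a..c} \<subseteq> abs ` set P"
proof -
  obtain i where "abs ` set (take (nat (c - a) + 1) (drop i P)) = {a..c}"
    using assms unfolding conserved_in_def by blast
  moreover have "set (take (nat (c - a) + 1) (drop i P)) \<subseteq> set P"
    using set_take_subset set_drop_subset by (rule subset_trans)
  ultimately show ?thesis by (metis image_mono)
qed

theorem lemma5:
  fixes n :: nat and Ps :: "int list list" and u v c d :: int
  assumes "n \<ge> 2"
    and "Ps \<noteq> []"
    and "\<forall>P\<in>set Ps. signed_perm n P"
    and "hd Ps = [1..int n]"
    and "\<forall>P\<in>set Ps. hd P = 1 \<and> last P = int n"
    and "conserved n Ps u v" and "conserved n Ps c d"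
    and "u < c" and "c \<le> v" and "v < d"
  shows "conserved n Ps u c \<and> conserved n Ps c v \<and> conserved n Ps v d \<and> conserved n Ps u d"
proof -
  have I: "conserved_in P u v" and J: "conserved_in P c d" if "P \<in> set Ps" for P
    using assms(6-10) that unfolding conserved_def by auto
  have perm: "signed_perm n P" if "P \<in> set Ps" for P
    using assms(3) that by blast
  have overlap: "conserved_in P u c \<and> conserved_in P c v \<and> conserved_in P v d \<and> conserved_in P u d"
    if "P \<in> set Ps" for P
    using conserved_in_overlap[OF _ I J assms(8-10)] perm that unfolding signed_perm_def by blast
  have "hd Ps \<in> set Ps" using assms(2) by simp
  with conserved_in_subset_abs_set[OF I] perm have "{u..v} \<subseteq> {1..int n}"
    unfolding signed_perm_def by blast
  then have "1 \<le> c \<and> c \<le> int n" using assms(8-9) by auto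
  with overlap assms(8-10) show ?thesis
    unfolding conserved_def by auto
qed

end
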